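(* Let $\mathbb{K}$ be a field of characteristic different from $2$, with algebraic closure $\overline{\mathbb{K}}$. (a) If $\lambda = \alpha+\beta\in\overline{\mathbb{K}}$ with $\alpha\in\mathbb{K}$, $\beta\in Ker(H_\mathbb{K})$, has degree $2$ over $\mathbb{K}$, then the unique conjugate of $\lambda$ over $\mathbb{K}$ (other than $\lambda$) is its $\mathbb{K}$-involution $\overline{\lambda}=\alpha-\beta$. (b) If $\theta_1,\dots,\theta_l\in\overline{\mathbb{K}}$ are algebraic over $\mathbb{K}$ of degree at most $2$, then $\mathbb{K}(\theta_1,\dots,\theta_l)\subseteq\mathcal{R}_\mathbb{K}$ and $\overline{\theta_1+\cdots+\theta_l} = \overline{\theta_1}+\cdots+\overline{\theta_l}$. (c) If $\lambda\in\overline{\mathbb{K}}$ has degree at most $2$ over $\mathbb{K}$, then $\overline{xy}=\overline{x}\,\overline{y}$ for all $x,y\in\mathbb{K}(\lambda)$. (d) If $\beta,\beta'\in Ker(H_\mathbb{K})$ have degree $2$ over $\mathbb{K}$, then $\beta\beta'\in\mathbb{K}$ if and only if $\beta,\beta'$ are linearly dependent over $\mathbb{K}$; otherwise $\beta\beta'$ has degree $2$ over $\mathbb{K}$ and belongs to $Ker(H_\mathbb{K})$. (e) If $\beta\in\overline{\mathbb{K}}$ has degree $2$ over $\mathbb{K}$, then $\beta\in Ker(H_\mathbb{K})$ if and only if $\beta\notin\mathbb{K}$ and $\beta^2\in\mathbb{K}$.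
   Context: An element of $\overline{\mathbb{K}}$ is $\mathbb{K}$-regular if its degree over $\mathbb{K}$ is not a multiple of $char(\mathbb{K})$; $\mathcal{R}_\mathbb{K}$ is the set of such elements. For $\lambda\in\mathcal{R}_\mathbb{K}$ with monic minimal polynomial $X^d + a_{d-1}X^{d-1}+\cdots+a_0$ over $\mathbb{K}$, $H_\mathbb{K}(\lambda) = -a_{d-1}/d\in\mathbb{K}$, $V_\mathbb{K}(\lambda)=\lambda-H_\mathbb{K}(\lambda)$, and $Ker(H_\mathbb{K})=\{\lambda\in\mathcal{R}_\mathbb{K}: H_\mathbb{K}(\lambda)=0\}$. Every $\lambda\in\mathcal{R}_\mathbb{K}$ is uniquely $\lambda=\alpha+\beta$ with $\alpha\in\mathbb{K}$, $\beta\in Ker(H_\mathbb{K})$ (namely $\alpha=H_\mathbb{K}(\lambda)$, $\beta=V_\mathbb{K}(\lambda)$); the $\mathbb{K}$-involution of $\lambda$ is $\overline{\lambda}=\alpha-\beta$. *)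

theory Defs
  imports "HOL-Algebra.Algebraic_Closure_Type" "HOL-Computational_Algebra.Polynomial"
begin

text \<open>The base field K is a type 'k :: field; its algebraic closure is 'k alg_closure,
  with K embedded via to_ac.  So "x in K" means "x in range to_ac".\<close>

definition min_poly :: "'k :: field alg_closure \<Rightarrow> 'k poly" where
  "min_poly x = (THE p. lead_coeff p = 1 \<and> poly (map_poly to_ac p) x = 0 \<and>
      (\<forall>q. q \<noteq> 0 \<and> poly (map_poly to_ac q) x = 0 \<longrightarrow> degree p \<le> degree q))"

definition deg_over :: "'k :: field alg_closure \<Rightarrow> nat" where
  "deg_over x = degree (min_poly x)"

definition regular :: "'k :: field alg_closure \<Rightarrow> bool" where
  "regular x \<longleftrightarrow> \<not> (CHAR('k) dvd deg_over x)"

definition H :: "'k :: field alg_closure \<Rightarrow> 'k" where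
  "H x = - coeff (min_poly x) (deg_over x - 1) / of_nat (deg_over x)"

definition V :: "'k :: field alg_closure \<Rightarrow> 'k alg_closure" where
  "V x = x - to_ac (H x)"

definition KerH :: "'k :: field alg_closure set" where
  "KerH = {x. regular x \<and> H x = 0}"

definition invol :: "'k :: field alg_closure \<Rightarrow> 'k alg_closure" where
  "invol x = to_ac (H x) - V x"

definition subfield :: "'a :: field set \<Rightarrow> bool" where
  "subfield F \<longleftrightarrow> 0 \<in> F \<and> 1 \<in> F \<and> (\<forall>x\<in>F. \<forall>y\<in>F. x + y \<in> F \<and> x * y \<in> F \<and> x - y \<in> F)
     \<and> (\<forall>x\<in>F. -x \<in> F \<and> inverse x \<in> F)"

definition gen_field :: "'k :: field alg_closure set \<Rightarrow> 'k alg_closure set" where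
  "gen_field S = \<Inter>{F. subfield F \<and> range to_ac \<subseteq> F \<and> S \<subseteq> F}"

definition lin_dep2 :: "'k :: field alg_closure \<Rightarrow> 'k alg_closure \<Rightarrow> bool" where
  "lin_dep2 x y \<longleftrightarrow> (\<exists>a b :: 'k. (a \<noteq> 0 \<or> b \<noteq> 0) \<and> to_ac a * x + to_ac b * y = 0)"

end

theory Submission
  imports Defs
begin

text \<open>Every element of degree at most two is \<open>a + b\<close> with \<open>a \<in> K\<close> and \<open>b\<^sup>2 \<in> K\<close>. Adjoining such
  square roots one at a time yields a field \<open>F\<close> carrying a group \<open>G\<close> of \<open>2\<^sup>r\<close> involutive
  \<open>K\<close>-automorphisms with fixed field \<open>K\<close>; the automorphisms of \<open>F(b)\<close> are those of \<open>F\<close> extended by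
  \<open>b \<mapsto> \<plusminus>b\<close>. For \<open>x \<in> F\<close> the minimal polynomial of \<open>x\<close> is \<open>\<Prod>y \<in> G x. (X - y)\<close>, so the
  degree of \<open>x\<close> is the orbit size, which divides \<open>2\<^sup>r\<close> and is therefore regular, and \<open>H x\<close> is the mean
  of the orbit, i.e. the mean of \<open>g x\<close> over \<open>G\<close>. This mean is additive, hence so is the involution
  \<open>x \<mapsto> 2 H x - x\<close>; when \<open>|G| = 2\<close> the involution is the nontrivial automorphism and thus
  multiplicative. The remaining statements are computations with monic quadratics.\<close>

lemma two_neq_zero_if_CHAR_neq_2:
  assumes "CHAR('a::field) \<noteq> 2"
  shows "(2::'a) \<noteq> 0"
proof
  assume "(2::'a) = 0"
  then have "CHAR('a) dvd 2"
    by (metis of_nat_eq_0_iff_char_dvd of_nat_numeral)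
  moreover have "CHAR('a) \<noteq> 1"
    by (metis of_nat_1 of_nat_CHAR one_neq_zero)
  ultimately show False
    using assms two_is_prime_nat unfolding prime_nat_iff by blast
qed

lemma two_neq_zero_alg_closure:
  "CHAR('k::field) \<noteq> 2 \<Longrightarrow> (2::'k alg_closure) \<noteq> 0"
  using two_neq_zero_if_CHAR_neq_2[where 'a="'k alg_closure"] by simp

lemma regular_iff_of_nat_deg_over:
  fixes x :: "'k::field alg_closure"
  shows "regular x \<longleftrightarrow> (of_nat (deg_over x) :: 'k) \<noteq> 0"
  unfolding regular_def by (simp add: of_nat_eq_0_iff_char_dvd)

section \<open>Minimal polynomials\<close>

lemma map_poly_to_ac_eq_0_iff [simp]: "map_poly to_ac p = 0 \<longleftrightarrow> p = 0"
  by (intro map_poly_eq_0_iff) auto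

lemma degree_map_poly_to_ac [simp]: "degree (map_poly to_ac p) = degree p"
  by (rule degree_map_poly) auto

lemma coeff_map_poly_to_ac [simp]: "coeff (map_poly to_ac p) n = to_ac (coeff p n)"
  by (simp add: coeff_map_poly)

lemma map_poly_to_ac_diff: "map_poly to_ac (p - q) = map_poly to_ac p - map_poly to_ac q"
  by (intro poly_eqI) simp

lemma map_poly_to_ac_smult: "map_poly to_ac (smult c p) = smult (to_ac c) (map_poly to_ac p)"
  by (intro poly_eqI) simp

lemma poly_map_poly_to_ac_degree_le_1:
  "degree p \<le> 1 \<Longrightarrow> poly (map_poly to_ac p) x = to_ac (coeff p 1) * x + to_ac (coeff p 0)"
  by (cases "degree p") (auto simp: poly_altdef coeff_eq_0)

lemma poly_map_poly_to_ac_monic_quadratic: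
  assumes "degree p = 2" "lead_coeff p = 1"
  shows "poly (map_poly to_ac p) x = x^2 + to_ac (coeff p 1) * x + to_ac (coeff p 0)"
  using assms by (simp add: poly_altdef numeral_2_eq_2 atMost_Suc algebra_simps power2_eq_square)

lemma min_poly_eqI:
  assumes lead: "lead_coeff p = 1" and root: "poly (map_poly to_ac p) x = 0"
    and minimal: "\<forall>q. q \<noteq> 0 \<and> poly (map_poly to_ac q) x = 0 \<longrightarrow> degree p \<le> degree q"
  shows "min_poly x = p"
  unfolding min_poly_def
proof (rule the_equality)
  show "lead_coeff p = 1 \<and> poly (map_poly to_ac p) x = 0 \<and>
      (\<forall>q. q \<noteq> 0 \<and> poly (map_poly to_ac q) x = 0 \<longrightarrow> degree p \<le> degree q)"
    using assms by blast
next
  fix p' assume p': "lead_coeff p' = 1 \<and> poly (map_poly to_ac p') x = 0 \<and>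
      (\<forall>q. q \<noteq> 0 \<and> poly (map_poly to_ac q) x = 0 \<longrightarrow> degree p' \<le> degree q)"
  have "p \<noteq> 0" "p' \<noteq> 0" using lead p' by auto
  then have "degree p \<le> degree p'" "degree p' \<le> degree p"
    using minimal root p' by blast+
  then have same_degree: "degree p' = degree p" by simp
  show "p' = p"
  proof (rule ccontr)
    assume "p' \<noteq> p"
    then have nonzero: "p' - p \<noteq> 0" by simp
    have "poly (map_poly to_ac (p' - p)) x = 0"
      using root p' by (simp add: map_poly_to_ac_diff)
    then have "degree p \<le> degree (p' - p)" using minimal nonzero by blast
    moreover have "degree (p' - p) \<le> degree p"
      using degree_diff_le_max[of p' p] same_degree by simp
    moreover have "coeff (p' - p) (degree p) = 0" using lead p' same_degree by simp
    ultimately show False using nonzero by (metis le_antisym leading_coeff_0_iff)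
  qed
qed

lemma min_poly_spec:
  fixes x :: "'k::field alg_closure"
  shows "lead_coeff (min_poly x) = 1 \<and> poly (map_poly to_ac (min_poly x)) x = 0 \<and>
    (\<forall>q. q \<noteq> 0 \<and> poly (map_poly to_ac q) x = 0 \<longrightarrow> degree (min_poly x) \<le> degree q)"
proof -
  define annihilates where "annihilates q \<longleftrightarrow> q \<noteq> 0 \<and> poly (map_poly to_ac q) x = 0" for q :: "'k poly"
  obtain p where "annihilates p"
    using alg_closure_algebraic[of x] unfolding annihilates_def by blast
  obtain q where q: "annihilates q" and q_least: "\<And>r. annihilates r \<Longrightarrow> degree q \<le> degree r"
    using ex_has_least_nat[of annihilates p degree] \<open>annihilates p\<close> by blast
  define m where "m = smult (inverse (lead_coeff q)) q"
  have lead: "lead_coeff m = 1" and root: "poly (map_poly to_ac m) x = 0"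
    using q by (simp_all add: m_def annihilates_def map_poly_to_ac_smult)
  have minimal: "\<forall>r. r \<noteq> 0 \<and> poly (map_poly to_ac r) x = 0 \<longrightarrow> degree m \<le> degree r"
    using q q_least by (simp add: m_def annihilates_def)
  show ?thesis using min_poly_eqI[OF lead root minimal] lead root minimal by simp
qed

lemma lead_coeff_min_poly [simp]: "lead_coeff (min_poly x) = 1"
  using min_poly_spec by blast

lemma min_poly_nonzero [simp]: "min_poly x \<noteq> 0"
  using lead_coeff_min_poly[of x] by (metis leading_coeff_0_iff zero_neq_one)

lemma poly_min_poly [simp]: "poly (map_poly to_ac (min_poly x)) x = 0"
  using min_poly_spec by blast

lemma degree_min_poly_le:
  "q \<noteq> 0 \<Longrightarrow> poly (map_poly to_ac q) x = 0 \<Longrightarrow> degree (min_poly x) \<le> degree q"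
  using min_poly_spec by blast

lemma in_range_to_ac_if_root_degree_le_1:
  assumes "q \<noteq> 0" "degree q \<le> 1" "poly (map_poly to_ac q) x = 0"
  shows "x \<in> range to_ac"
proof -
  have eval: "to_ac (coeff q 1) * x + to_ac (coeff q 0) = 0"
    using assms by (simp add: poly_map_poly_to_ac_degree_le_1)
  have "degree q = 1"
  proof (rule ccontr)
    assume "degree q \<noteq> 1"
    then have "degree q = 0" using assms(2) by linarith
    then show False using eval assms(1) by (simp add: coeff_eq_0) (metis leading_coeff_0_iff)
  qed
  then have "coeff q 1 \<noteq> 0" using assms(1) by (metis leading_coeff_0_iff)
  then have "x = to_ac (- coeff q 0 / coeff q 1)"
    using eval by (simp add: field_simps add_eq_0_iff2)
  then show ?thesis by blast
qed

lemma deg_over_le_1_iff: "deg_over x \<le> 1 \<longleftrightarrow> x \<in> range to_ac"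
proof
  assume "deg_over x \<le> 1"
  then show "x \<in> range to_ac"
    unfolding deg_over_def by (intro in_range_to_ac_if_root_degree_le_1) auto
next
  assume "x \<in> range to_ac"
  then obtain k where "x = to_ac k" by blast
  then have "poly (map_poly to_ac [:-k, 1:]) x = 0" by (simp add: map_poly_pCons)
  then show "deg_over x \<le> 1"
    unfolding deg_over_def using degree_min_poly_le[of "[:-k, 1:]" x] by simp
qed

lemma deg_over_eq_2_notin_range_to_ac: "deg_over x = 2 \<Longrightarrow> x \<notin> range to_ac"
  using deg_over_le_1_iff[of x] by simp

lemma root_min_poly_deg_over_2:
  "deg_over x = 2 \<Longrightarrow> x^2 + to_ac (coeff (min_poly x) 1) * x + to_ac (coeff (min_poly x) 0) = 0"
  unfolding deg_over_def
  by (metis poly_map_poly_to_ac_monic_quadratic lead_coeff_min_poly poly_min_poly)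

lemma min_poly_quadratic:
  assumes "x \<notin> range to_ac" and root: "x^2 + to_ac p * x + to_ac q = 0"
  shows "min_poly x = [:q, p, 1:]"
proof (rule min_poly_eqI)
  show "poly (map_poly to_ac [:q, p, 1:]) x = 0"
    using root by (simp add: map_poly_pCons algebra_simps power2_eq_square)
  show "\<forall>r. r \<noteq> 0 \<and> poly (map_poly to_ac r) x = 0 \<longrightarrow> degree [:q, p, 1:] \<le> degree r"
    using in_range_to_ac_if_root_degree_le_1 assms(1) by (metis degree_pCons_eq_if not_less_eq_eq
        numeral_2_eq_2 one_neq_zero pCons_eq_0_iff One_nat_def)
qed simp

lemma deg_over_eq_2_iff:
  "deg_over x = 2 \<longleftrightarrow> x \<notin> range to_ac \<and> (\<exists>p q. x^2 + to_ac p * x + to_ac q = 0)"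
  using deg_over_eq_2_notin_range_to_ac root_min_poly_deg_over_2 min_poly_quadratic
  unfolding deg_over_def by fastforce

lemma H_deg_over_2: "deg_over x = 2 \<Longrightarrow> H x = - coeff (min_poly x) 1 / 2"
  unfolding H_def by simp

lemma invol_eq: "invol x = 2 * to_ac (H x) - x"
  unfolding invol_def V_def by (simp add: algebra_simps)

lemma regular_if_deg_over_2:
  fixes x :: "'k::field alg_closure"
  assumes "CHAR('k) \<noteq> 2" "deg_over x = 2"
  shows "regular x"
  using two_neq_zero_if_CHAR_neq_2[OF assms(1)] assms(2) by (simp add: regular_iff_of_nat_deg_over)

section \<open>Elements of degree two\<close>

lemma add_to_ac_notin_range_to_ac:
  assumes "b \<notin> range to_ac"
  shows "to_ac a + b \<notin> range to_ac"
proof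
  assume "to_ac a + b \<in> range to_ac"
  then obtain k where "to_ac a + b = to_ac k" by blast
  then have "b = to_ac (k - a)" by (simp add: algebra_simps)
  with assms show False by blast
qed

lemma min_poly_add_sqrt:
  assumes "b \<notin> range to_ac" "b^2 = to_ac c"
  shows "min_poly (to_ac a + b) = [:a^2 - c, - 2 * a, 1:]"
proof (rule min_poly_quadratic)
  show "to_ac a + b \<notin> range to_ac" using assms(1) by (rule add_to_ac_notin_range_to_ac)
  show "(to_ac a + b)^2 + to_ac (- 2 * a) * (to_ac a + b) + to_ac (a^2 - c) = 0"
    using assms(2) by (simp add: power2_eq_square algebra_simps)
qed

lemma poly_min_poly_add_sqrt:
  assumes "b^2 = to_ac c"
  shows "poly (map_poly to_ac [:a^2 - c, - 2 * a, 1:]) \<mu> = (\<mu> - (to_ac a + b)) * (\<mu> - (to_ac a - b))"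
  using assms by (simp add: map_poly_pCons power2_eq_square algebra_simps)

lemma deg_over_add_sqrt:
  assumes "b \<notin> range to_ac" "b^2 = to_ac c"
  shows "deg_over (to_ac a + b) = 2"
  unfolding deg_over_def min_poly_add_sqrt[OF assms] by simp

lemma H_add_sqrt:
  fixes a :: "'k::field"
  assumes "CHAR('k) \<noteq> 2" "b \<notin> range to_ac" "b^2 = to_ac c"
  shows "H (to_ac a + b) = a"
  using H_deg_over_2[OF deg_over_add_sqrt[OF assms(2,3)]] two_neq_zero_if_CHAR_neq_2[OF assms(1)]
  by (simp add: min_poly_add_sqrt[OF assms(2,3)])

lemma sqrt_in_KerH:
  fixes x :: "'k::field alg_closure"
  assumes "CHAR('k) \<noteq> 2" "x \<notin> range to_ac" "x^2 \<in> range to_ac"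
  shows "deg_over x = 2" "x \<in> KerH"
proof -
  obtain c where c: "x^2 = to_ac c" using assms(3) by blast
  show deg: "deg_over x = 2" using deg_over_add_sqrt[OF assms(2) c, of 0] by simp
  have "H x = 0" using H_add_sqrt[OF assms(1,2) c, of 0] by simp
  then show "x \<in> KerH"
    unfolding KerH_def using regular_if_deg_over_2[OF assms(1) deg] by simp
qed

lemma KerH_iff_sqrt:
  fixes x :: "'k::field alg_closure"
  assumes "CHAR('k) \<noteq> 2" "deg_over x = 2"
  shows "x \<in> KerH \<longleftrightarrow> x \<notin> range to_ac \<and> x^2 \<in> range to_ac"
proof
  assume "x \<in> KerH"
  then have "coeff (min_poly x) 1 = 0"
    using H_deg_over_2[OF assms(2)] two_neq_zero_if_CHAR_neq_2[OF assms(1)]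
    by (simp add: KerH_def)
  then have "x^2 = to_ac (- coeff (min_poly x) 0)"
    using root_min_poly_deg_over_2[OF assms(2)] by (simp add: eq_neg_iff_add_eq_0)
  then show "x \<notin> range to_ac \<and> x^2 \<in> range to_ac"
    using deg_over_eq_2_notin_range_to_ac[OF assms(2)] by blast
qed (use sqrt_in_KerH[OF assms(1)] in blast)

lemma sqrt_decomposition:
  fixes x :: "'k::field alg_closure"
  assumes "CHAR('k) \<noteq> 2" "deg_over x \<le> 2"
  obtains a b where "x = to_ac a + b" "b^2 \<in> range to_ac"
proof (cases "x \<in> range to_ac")
  case True
  then obtain k where "x = to_ac k" by blast
  then show ?thesis using that[of k 0] by simp
next
  case False
  then have "deg_over x = 2" using assms(2) deg_over_le_1_iff[of x] by simp
  then obtain p q where root: "x^2 + to_ac p * x + to_ac q = 0"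
    using deg_over_eq_2_iff by blast
  define h where "h = to_ac (p / 2)"
  have "2 * (p / 2) = p" using two_neq_zero_if_CHAR_neq_2[OF assms(1)] by simp
  then have "2 * h = to_ac p" unfolding h_def by (metis to_ac_mult to_ac_numeral)
  then have "(x + h)^2 = x^2 + to_ac p * x + h^2" by (simp add: power2_eq_square algebra_simps)
  also have "\<dots> = to_ac ((p / 2)^2 - q)" using root by (simp add: h_def algebra_simps)
  finally have "(x + h)^2 \<in> range to_ac" by blast
  moreover have "x = to_ac (- (p / 2)) + (x + h)" by (simp add: h_def)
  ultimately show ?thesis using that by blast
qed

lemma conjugate_eq_invol:
  fixes \<alpha> :: "'k::field"
  assumes char: "CHAR('k) \<noteq> 2" and \<beta>: "\<beta> \<in> KerH" and deg: "deg_over (to_ac \<alpha> + \<beta>) = 2"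
  shows "{\<mu>. poly (map_poly to_ac (min_poly (to_ac \<alpha> + \<beta>))) \<mu> = 0} - {to_ac \<alpha> + \<beta>}
           = {invol (to_ac \<alpha> + \<beta>)}"
    and "invol (to_ac \<alpha> + \<beta>) = to_ac \<alpha> - \<beta>"
proof -
  have \<beta>_notin: "\<beta> \<notin> range to_ac"
    using deg_over_eq_2_notin_range_to_ac[OF deg] add_to_ac_notin_range_to_ac
    by (metis rangeE rangeI to_ac_add)
  obtain p q where "(to_ac \<alpha> + \<beta>)^2 + to_ac p * (to_ac \<alpha> + \<beta>) + to_ac q = 0"
    using deg deg_over_eq_2_iff by blast
  then have "\<beta>^2 + to_ac (2 * \<alpha> + p) * \<beta> + to_ac (\<alpha>^2 + p * \<alpha> + q) = 0"
    by (simp add: power2_eq_square algebra_simps)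
  then have "deg_over \<beta> = 2" using \<beta>_notin deg_over_eq_2_iff by blast
  then obtain c where c: "\<beta>^2 = to_ac c" using \<beta> KerH_iff_sqrt[OF char] by blast
  show invol: "invol (to_ac \<alpha> + \<beta>) = to_ac \<alpha> - \<beta>"
    unfolding invol_eq H_add_sqrt[OF char \<beta>_notin c] by simp
  have "\<beta> \<noteq> 0" using \<beta>_notin by (metis rangeI to_ac_0)
  then have "to_ac \<alpha> - \<beta> \<noteq> to_ac \<alpha> + \<beta>"
    using two_neq_zero_alg_closure[OF char] by (simp add: mult_2[symmetric])
  then show "{\<mu>. poly (map_poly to_ac (min_poly (to_ac \<alpha> + \<beta>))) \<mu> = 0} - {to_ac \<alpha> + \<beta>}
      = {invol (to_ac \<alpha> + \<beta>)}"
    unfolding invol min_poly_add_sqrt[OF \<beta>_notin c] poly_min_poly_add_sqrt[OF c] by auto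
qed

lemma mult_in_range_to_ac_iff_lin_dep2:
  assumes "\<beta> \<noteq> 0" "\<beta>^2 = to_ac c"
  shows "\<beta> * \<beta>' \<in> range to_ac \<longleftrightarrow> lin_dep2 \<beta> \<beta>'"
proof
  assume "\<beta> * \<beta>' \<in> range to_ac"
  then obtain k where k: "\<beta> * \<beta>' = to_ac k" by blast
  have "c \<noteq> 0" using assms by auto
  moreover have "to_ac k * \<beta> + to_ac (- c) * \<beta>' = 0"
    using k[symmetric] assms(2)[symmetric] by (simp add: power2_eq_square algebra_simps)
  ultimately show "lin_dep2 \<beta> \<beta>'" unfolding lin_dep2_def by (intro exI[of _ k] exI[of _ "- c"]) simp
next
  assume "lin_dep2 \<beta> \<beta>'"
  then obtain a b where ab: "a \<noteq> 0 \<or> b \<noteq> 0" "to_ac a * \<beta> + to_ac b * \<beta>' = 0"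
    unfolding lin_dep2_def by blast
  then have "b \<noteq> 0" using assms(1) by auto
  then have "\<beta>' = to_ac (- a / b) * \<beta>"
    using ab(2) by (simp add: field_simps add_eq_0_iff2)
  then have "\<beta> * \<beta>' = to_ac (- a / b * c)" using assms(2) by (simp add: power2_eq_square)
  then show "\<beta> * \<beta>' \<in> range to_ac" by blast
qed

lemma KerH_mult:
  fixes \<beta> :: "'k::field alg_closure"
  assumes char: "CHAR('k) \<noteq> 2" and "\<beta> \<in> KerH" "\<beta>' \<in> KerH" "deg_over \<beta> = 2" "deg_over \<beta>' = 2"
  shows "\<beta> * \<beta>' \<in> range to_ac \<longleftrightarrow> lin_dep2 \<beta> \<beta>'"
    and "\<not> lin_dep2 \<beta> \<beta>' \<Longrightarrow> deg_over (\<beta> * \<beta>') = 2 \<and> \<beta> * \<beta>' \<in> KerH"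
proof -
  obtain c c' where c: "\<beta>^2 = to_ac c" and c': "\<beta>'^2 = to_ac c'" and "\<beta> \<notin> range to_ac"
    using assms KerH_iff_sqrt[OF char] by blast
  then have "\<beta> \<noteq> 0" by (metis rangeI to_ac_0)
  show iff: "\<beta> * \<beta>' \<in> range to_ac \<longleftrightarrow> lin_dep2 \<beta> \<beta>'"
    by (rule mult_in_range_to_ac_iff_lin_dep2[OF \<open>\<beta> \<noteq> 0\<close> c])
  have "(\<beta> * \<beta>')^2 = to_ac (c * c')" by (simp add: power_mult_distrib c c')
  then show "\<not> lin_dep2 \<beta> \<beta>' \<Longrightarrow> deg_over (\<beta> * \<beta>') = 2 \<and> \<beta> * \<beta>' \<in> KerH"
    using iff sqrt_in_KerH[OF char] by (metis rangeI)
qed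

section \<open>Subfields and polynomials with prescribed roots\<close>

context
  fixes F :: "'a::field set"
  assumes F: "subfield F"
begin

lemma subfield_zero: "0 \<in> F" and subfield_one: "1 \<in> F"
  using F unfolding subfield_def by blast+

lemma subfield_add: "x \<in> F \<Longrightarrow> y \<in> F \<Longrightarrow> x + y \<in> F"
  and subfield_mult: "x \<in> F \<Longrightarrow> y \<in> F \<Longrightarrow> x * y \<in> F"
  and subfield_diff: "x \<in> F \<Longrightarrow> y \<in> F \<Longrightarrow> x - y \<in> F"
  and subfield_uminus: "x \<in> F \<Longrightarrow> - x \<in> F"
  and subfield_inverse: "x \<in> F \<Longrightarrow> inverse x \<in> F"
  using F unfolding subfield_def by blast+

lemma subfield_divide: "x \<in> F \<Longrightarrow> y \<in> F \<Longrightarrow> x / y \<in> F"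
  by (simp add: divide_inverse subfield_inverse subfield_mult)

lemma subfield_sum: "(\<And>i. i \<in> A \<Longrightarrow> f i \<in> F) \<Longrightarrow> sum f A \<in> F"
  by (induction A rule: infinite_finite_induct) (auto intro: subfield_zero subfield_add)

end

lemma gen_field_subset: "subfield F \<Longrightarrow> range to_ac \<subseteq> F \<Longrightarrow> S \<subseteq> F \<Longrightarrow> gen_field S \<subseteq> F"
  unfolding gen_field_def by blast

definition root_poly :: "'a::comm_ring_1 set \<Rightarrow> 'a poly" where
  "root_poly S = (\<Prod>y\<in>S. [:- y, 1:])"

lemma poly_root_poly_eq_0_iff: "finite S \<Longrightarrow> poly (root_poly S) z = 0 \<longleftrightarrow> z \<in> S"
  for z :: "'a::idom"
  by (simp add: root_poly_def poly_prod)

lemma coeff_linear_mult: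
  "coeff ([:- a, 1:] * p) n = (if n = 0 then 0 else coeff p (n - 1)) - a * coeff p n"
  for a :: "'a::comm_ring_1"
  by (cases n) simp_all

lemma root_poly_coeffs:
  fixes S :: "'a::idom set"
  assumes "finite S"
  shows "degree (root_poly S) = card S" "coeff (root_poly S) (card S) = 1"
    "S \<noteq> {} \<Longrightarrow> coeff (root_poly S) (card S - 1) = - (\<Sum>y\<in>S. y)"
proof -
  have "degree (root_poly S) = card S \<and> coeff (root_poly S) (card S) = 1 \<and>
    (S \<noteq> {} \<longrightarrow> coeff (root_poly S) (card S - 1) = - (\<Sum>y\<in>S. y))"
    using assms
  proof (induction S rule: finite_induct)
    case (insert a S)
    have split: "root_poly (insert a S) = [:- a, 1:] * root_poly S"
      using insert.hyps by (simp add: root_poly_def)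
    have "root_poly S \<noteq> 0" using insert.IH by auto
    then have "degree ([:- a, 1:] * root_poly S) = 1 + degree (root_poly S)"
      by (subst degree_mult_eq) auto
    then have "degree (root_poly (insert a S)) = card (insert a S)"
      unfolding split using insert.hyps insert.IH by simp
    moreover have "coeff (root_poly (insert a S)) (card (insert a S)) = 1"
      unfolding split coeff_linear_mult using insert.hyps insert.IH by (simp add: coeff_eq_0)
    moreover have "coeff (root_poly (insert a S)) (card (insert a S) - 1) = - (\<Sum>y\<in>insert a S. y)"
      unfolding split coeff_linear_mult using insert.hyps insert.IH
      by (cases "S = {}") (simp_all add: root_poly_def card_gt_0_iff)
    ultimately show ?case by blast
  qed (simp add: root_poly_def)
  then show "degree (root_poly S) = card S" "coeff (root_poly S) (card S) = 1"
    "S \<noteq> {} \<Longrightarrow> coeff (root_poly S) (card S - 1) = - (\<Sum>y\<in>S. y)"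
    by blast+
qed

section \<open>Groups of involutive automorphisms\<close>

text \<open>The maps in \<open>G\<close> are \<open>K\<close>-automorphisms of \<open>F\<close>, extended by the identity outside \<open>F\<close> so that
  two of them are equal as functions iff they agree on \<open>F\<close>.\<close>

locale involution_group =
  fixes F :: "'k::field alg_closure set"
    and G :: "('k alg_closure \<Rightarrow> 'k alg_closure) set"
  assumes subfield: "subfield F"
    and range_to_ac_subset: "range to_ac \<subseteq> F"
    and finite_G: "finite G"
    and id_in_G: "id \<in> G"
    and card_G_power_of_2: "\<exists>r. card G = 2 ^ r"
    and fixes_outside: "g \<in> G \<Longrightarrow> z \<notin> F \<Longrightarrow> g z = z"
    and maps_into: "g \<in> G \<Longrightarrow> z \<in> F \<Longrightarrow> g z \<in> F"
    and hom_add: "g \<in> G \<Longrightarrow> x \<in> F \<Longrightarrow> y \<in> F \<Longrightarrow> g (x + y) = g x + g y"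
    and hom_mult: "g \<in> G \<Longrightarrow> x \<in> F \<Longrightarrow> y \<in> F \<Longrightarrow> g (x * y) = g x * g y"
    and fixes_to_ac: "g \<in> G \<Longrightarrow> g (to_ac k) = to_ac k"
    and comp_in_G: "g \<in> G \<Longrightarrow> h \<in> G \<Longrightarrow> g \<circ> h \<in> G"
    and involutive: "g \<in> G \<Longrightarrow> g (g z) = z"
    and fixed_points: "z \<in> F \<Longrightarrow> (\<And>g. g \<in> G \<Longrightarrow> g z = z) \<Longrightarrow> z \<in> range to_ac"
begin

lemma to_ac_in_F: "to_ac k \<in> F"
  using range_to_ac_subset by blast

lemma hom_0: "g \<in> G \<Longrightarrow> g 0 = 0"
  and hom_1: "g \<in> G \<Longrightarrow> g 1 = 1"
  using fixes_to_ac[of g 0] fixes_to_ac[of g 1] by simp_all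

lemma hom_uminus: "g \<in> G \<Longrightarrow> x \<in> F \<Longrightarrow> g (- x) = - g x"
  using hom_add[of g x "- x"] hom_0[of g] subfield_uminus[OF subfield] by (simp add: add_eq_0_iff)

lemma hom_sum: "g \<in> G \<Longrightarrow> (\<And>i. i \<in> A \<Longrightarrow> f i \<in> F) \<Longrightarrow> g (sum f A) = (\<Sum>i\<in>A. g (f i))"
  by (induction A rule: infinite_finite_induct)
    (simp_all add: hom_0 hom_add subfield_sum[OF subfield])

lemma inj_G: "g \<in> G \<Longrightarrow> inj g"
  by (metis involutive injI)

lemma poly_in_F: "y \<in> F \<Longrightarrow> poly (map_poly to_ac p) y \<in> F"
  by (induction p) (auto simp: map_poly_pCons to_ac_in_F subfield_add[OF subfield]
      subfield_mult[OF subfield] subfield_zero[OF subfield])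

lemma hom_poly: "g \<in> G \<Longrightarrow> y \<in> F \<Longrightarrow> g (poly (map_poly to_ac p) y) = poly (map_poly to_ac p) (g y)"
  by (induction p) (auto simp: map_poly_pCons hom_0 hom_add hom_mult fixes_to_ac to_ac_in_F poly_in_F
      subfield_mult[OF subfield])

lemma map_poly_hom_mult:
  assumes "g \<in> G" "\<And>n. coeff p n \<in> F" "\<And>n. coeff q n \<in> F"
  shows "map_poly g (p * q) = map_poly g p * map_poly g q"
proof (rule poly_eqI)
  fix n
  have "g (coeff (p * q) n) = (\<Sum>i\<le>n. g (coeff p i) * g (coeff q (n - i)))"
    using assms by (simp add: coeff_mult hom_sum hom_mult subfield_mult[OF subfield])
  then show "coeff (map_poly g (p * q)) n = coeff (map_poly g p * map_poly g q) n"
    using assms(1) by (simp add: coeff_map_poly hom_0 coeff_mult)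
qed

lemma root_poly_in_F:
  assumes "finite S" "S \<subseteq> F"
  shows "coeff (root_poly S) n \<in> F"
  using assms
proof (induction S arbitrary: n rule: finite_induct)
  case (insert a S)
  have "coeff (root_poly (insert a S)) n
      = (if n = 0 then 0 else coeff (root_poly S) (n - 1)) - a * coeff (root_poly S) n"
    using insert.hyps by (simp add: root_poly_def coeff_linear_mult del: mult_pCons_left)
  then show ?case
    using insert by (simp add: subfield_zero[OF subfield] subfield_diff[OF subfield]
        subfield_mult[OF subfield])
qed (simp add: root_poly_def coeff_1 subfield_zero[OF subfield] subfield_one[OF subfield])

lemma map_poly_root_poly:
  assumes "g \<in> G" "finite S" "S \<subseteq> F"
  shows "map_poly g (root_poly S) = (\<Prod>y\<in>S. [:- g y, 1:])"
  using assms(2,3)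
proof (induction S rule: finite_induct)
  case (insert a S)
  have "coeff [:- a, 1:] n \<in> F" for n
    using insert.prems by (simp add: coeff_pCons subfield_uminus[OF subfield] subfield_zero[OF subfield]
        subfield_one[OF subfield] split: nat.split)
  then have "map_poly g ([:- a, 1:] * root_poly S) = map_poly g [:- a, 1:] * map_poly g (root_poly S)"
    using insert assms(1) root_poly_in_F by (intro map_poly_hom_mult) auto
  then have "map_poly g (root_poly (insert a S)) = map_poly g [:- a, 1:] * map_poly g (root_poly S)"
    using insert.hyps by (simp add: root_poly_def del: mult_pCons_left)
  also have "map_poly g [:- a, 1:] = [:- g a, 1:]"
    using insert.prems assms(1)
    by (intro poly_eqI) (simp add: coeff_map_poly hom_0 hom_1 hom_uminus coeff_pCons split: nat.split)
  finally show ?case using insert by simp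
qed (use assms(1) hom_1 in \<open>simp add: root_poly_def\<close>)

definition orbit :: "'k alg_closure \<Rightarrow> 'k alg_closure set" where
  "orbit x = (\<lambda>g. g x) ` G"

definition stabilizer :: "'k alg_closure \<Rightarrow> ('k alg_closure \<Rightarrow> 'k alg_closure) set" where
  "stabilizer x = {g \<in> G. g x = x}"

lemma finite_orbit: "finite (orbit x)"
  unfolding orbit_def using finite_G by simp

lemma in_orbit: "x \<in> orbit x"
  unfolding orbit_def using id_in_G by (metis id_apply image_eqI)

lemma orbit_subset: "x \<in> F \<Longrightarrow> orbit x \<subseteq> F"
  unfolding orbit_def using maps_into by blast

lemma in_orbit_comp: "h \<in> G \<Longrightarrow> g \<in> G \<Longrightarrow> h (g x) \<in> orbit x"
  unfolding orbit_def using comp_in_G by (metis comp_apply image_eqI)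

lemma image_orbit:
  assumes "h \<in> G"
  shows "h ` orbit x = orbit x"
proof
  show "h ` orbit x \<subseteq> orbit x"
  proof
    fix y assume "y \<in> h ` orbit x"
    then obtain g where "g \<in> G" "y = h (g x)" unfolding orbit_def by blast
    then show "y \<in> orbit x" using in_orbit_comp[OF assms] by blast
  qed
  show "orbit x \<subseteq> h ` orbit x"
  proof
    fix y assume "y \<in> orbit x"
    then obtain g where "g \<in> G" "y = g x" unfolding orbit_def by blast
    then have "y = h (h (g x))" "h (g x) \<in> orbit x"
      using involutive[OF assms] in_orbit_comp[OF assms] by auto
    then show "y \<in> h ` orbit x" by blast
  qed
qed

lemma coeff_root_poly_orbit_in_range_to_ac:
  assumes "x \<in> F"
  shows "coeff (root_poly (orbit x)) n \<in> range to_ac"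
proof (rule fixed_points)
  show "coeff (root_poly (orbit x)) n \<in> F"
    using root_poly_in_F finite_orbit orbit_subset[OF assms] by blast
  fix h assume h: "h \<in> G"
  have "map_poly h (root_poly (orbit x)) = (\<Prod>y\<in>orbit x. [:- h y, 1:])"
    using map_poly_root_poly[OF h finite_orbit orbit_subset[OF assms]] .
  also have "\<dots> = root_poly (h ` orbit x)"
    unfolding root_poly_def using inj_G[OF h]
    by (subst prod.reindex) (auto intro: inj_on_subset)
  finally have "map_poly h (root_poly (orbit x)) = root_poly (orbit x)"
    unfolding image_orbit[OF h] .
  then show "h (coeff (root_poly (orbit x)) n) = coeff (root_poly (orbit x)) n"
    by (metis coeff_map_poly hom_0[OF h])
qed

lemma map_poly_to_ac_min_poly:
  assumes "x \<in> F"
  shows "map_poly to_ac (min_poly x) = root_poly (orbit x)"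
proof -
  define Q where "Q = root_poly (orbit x)"
  define q where "q = map_poly of_ac Q"
  have qQ: "map_poly to_ac q = Q"
    unfolding q_def Q_def
    by (intro poly_eqI) (simp add: coeff_map_poly to_ac_of_ac coeff_root_poly_orbit_in_range_to_ac[OF assms])
  have degree_q: "degree q = card (orbit x)"
    using root_poly_coeffs(1)[OF finite_orbit] qQ by (metis Q_def degree_map_poly_to_ac)
  have "lead_coeff q = 1"
    using root_poly_coeffs(2)[OF finite_orbit] qQ degree_q by (metis Q_def coeff_map_poly_to_ac to_ac_eq_1_iff)
  moreover have "poly (map_poly to_ac q) x = 0"
    unfolding qQ Q_def using poly_root_poly_eq_0_iff[OF finite_orbit] in_orbit by blast
  moreover have "\<forall>r. r \<noteq> 0 \<and> poly (map_poly to_ac r) x = 0 \<longrightarrow> degree q \<le> degree r"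
  proof (intro allI impI)
    fix r :: "'k poly" assume r: "r \<noteq> 0 \<and> poly (map_poly to_ac r) x = 0"
    have "orbit x \<subseteq> {z. poly (map_poly to_ac r) z = 0}"
      using r hom_poly[OF _ assms, of _ r] hom_0 unfolding orbit_def by auto
    then have "card (orbit x) \<le> card {z. poly (map_poly to_ac r) z = 0}"
      using r by (intro card_mono poly_roots_finite) auto
    also have "\<dots> \<le> degree r"
      using card_poly_roots_bound[of "map_poly to_ac r"] r by simp
    finally show "degree q \<le> degree r" using degree_q by simp
  qed
  ultimately show ?thesis using qQ Q_def min_poly_eqI by metis
qed

lemma deg_over_eq_card_orbit: "x \<in> F \<Longrightarrow> deg_over x = card (orbit x)"
  unfolding deg_over_def
  by (metis degree_map_poly_to_ac map_poly_to_ac_min_poly root_poly_coeffs(1) finite_orbit)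

lemma H_eq_orbit_mean:
  assumes "x \<in> F"
  shows "to_ac (H x) = (\<Sum>y\<in>orbit x. y) / of_nat (card (orbit x))"
proof -
  have "to_ac (coeff (min_poly x) (card (orbit x) - 1)) = - (\<Sum>y\<in>orbit x. y)"
    using root_poly_coeffs(3)[OF finite_orbit] in_orbit map_poly_to_ac_min_poly[OF assms]
    by (metis coeff_map_poly_to_ac empty_iff)
  then show ?thesis unfolding H_def deg_over_eq_card_orbit[OF assms] by simp
qed

lemma card_fibre:
  assumes "y \<in> orbit x"
  shows "card {g \<in> G. g x = y} = card (stabilizer x)"
proof -
  obtain h where h: "h \<in> G" "y = h x" using assms unfolding orbit_def by blast
  have "bij_betw ((\<circ>) h) (stabilizer x) {g \<in> G. g x = y}"
    by (rule bij_betw_byWitness[where f' = "(\<circ>) h"])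
      (use h involutive comp_in_G in \<open>auto simp: stabilizer_def fun_eq_iff\<close>)
  then show ?thesis by (simp add: bij_betw_same_card)
qed

lemma card_G_eq: "card G = card (orbit x) * card (stabilizer x)"
proof -
  have "card G = (\<Sum>g\<in>G. 1)" by simp
  also have "\<dots> = (\<Sum>y\<in>orbit x. \<Sum>g\<in>{g \<in> G. g x = y}. 1)"
    unfolding orbit_def by (rule sum.image_gen[OF finite_G])
  also have "\<dots> = (\<Sum>y\<in>orbit x. card (stabilizer x))"
    using card_fibre by simp
  finally show ?thesis by simp
qed

lemma sum_G_eq: "(\<Sum>g\<in>G. g x) = of_nat (card (stabilizer x)) * (\<Sum>y\<in>orbit x. y)"
proof -
  have "(\<Sum>g\<in>G. g x) = (\<Sum>y\<in>orbit x. \<Sum>g\<in>{g \<in> G. g x = y}. g x)"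
    unfolding orbit_def by (rule sum.image_gen[OF finite_G])
  also have "\<dots> = (\<Sum>y\<in>orbit x. of_nat (card (stabilizer x)) * y)"
    using card_fibre by (intro sum.cong) auto
  finally show ?thesis by (simp add: sum_distrib_left)
qed

lemma of_nat_card_G_neq_0:
  assumes "CHAR('k) \<noteq> 2"
  shows "(of_nat (card G) :: 'k) \<noteq> 0"
  using card_G_power_of_2 two_neq_zero_if_CHAR_neq_2[OF assms] by auto

lemma regular_in_F:
  assumes "CHAR('k) \<noteq> 2" "x \<in> F"
  shows "regular x"
  using of_nat_card_G_neq_0[OF assms(1)]
  unfolding regular_iff_of_nat_deg_over deg_over_eq_card_orbit[OF assms(2)] card_G_eq[of x] by simp

lemma H_eq_G_mean:
  assumes "CHAR('k) \<noteq> 2" "x \<in> F"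
  shows "to_ac (H x) = (\<Sum>g\<in>G. g x) / of_nat (card G)"
proof -
  have "(of_nat (card (orbit x)) :: 'k alg_closure) \<noteq> 0" "(of_nat (card (stabilizer x)) :: 'k alg_closure) \<noteq> 0"
    using of_nat_card_G_neq_0[OF assms(1)] unfolding card_G_eq[of x]
    by (metis of_nat_mult mult_zero_left mult_zero_right to_ac_eq_0_iff to_ac_of_nat)+
  then show ?thesis
    unfolding H_eq_orbit_mean[OF assms(2)] sum_G_eq card_G_eq[of x] by simp
qed

lemma invol_sum:
  assumes "CHAR('k) \<noteq> 2" "\<And>i. i \<in> A \<Longrightarrow> f i \<in> F"
  shows "invol (\<Sum>i\<in>A. f i) = (\<Sum>i\<in>A. invol (f i))"
proof -
  have "to_ac (H (\<Sum>i\<in>A. f i)) = (\<Sum>g\<in>G. \<Sum>i\<in>A. g (f i)) / of_nat (card G)"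
    using assms by (simp add: H_eq_G_mean subfield_sum[OF subfield] hom_sum)
  also have "\<dots> = (\<Sum>i\<in>A. to_ac (H (f i)))"
    using assms by (simp add: H_eq_G_mean sum.swap[of _ G] sum_divide_distrib)
  finally show ?thesis
    unfolding invol_eq by (simp add: sum_subtractf sum_distrib_left)
qed

text \<open>With \<open>G = {id, \<sigma>}\<close> the involution is \<open>\<sigma>\<close> itself, hence multiplicative.\<close>

lemma invol_mult:
  assumes "CHAR('k) \<noteq> 2" "card G \<le> 2" "x \<in> F" "y \<in> F"
  shows "invol (x * y) = invol x * invol y"
proof -
  have invol_G: "invol z = 2 * ((\<Sum>g\<in>G. g z) / of_nat (card G)) - z" if "z \<in> F" for z
    unfolding invol_eq H_eq_G_mean[OF assms(1) that] ..
  have xy: "x * y \<in> F" using assms(3,4) by (rule subfield_mult[OF subfield])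
  have "card G \<noteq> 0" using finite_G id_in_G by auto
  then consider "card G = 1" | "card G = 2" using assms(2) by linarith
  then show ?thesis
  proof cases
    case 1
    then have "G = {id}" using id_in_G card_1_singletonE by blast
    then show ?thesis using invol_G assms(3,4) xy by simp
  next
    case 2
    then obtain \<sigma> where G: "G = {id, \<sigma>}" "\<sigma> \<noteq> id"
      using id_in_G unfolding card_2_iff by auto
    have "invol z = \<sigma> z" if "z \<in> F" for z
      using invol_G[OF that] 2 G two_neq_zero_alg_closure[OF assms(1)] by simp
    then show ?thesis using hom_mult[of \<sigma> x y] G assms(3,4) xy by simp
  qed
qed

end

lemma involution_group_range_to_ac: "involution_group (range to_ac) {id}"
proof
  show "subfield (range (to_ac :: 'k::field \<Rightarrow> _))"
    unfolding subfield_def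
    by (auto simp flip: to_ac_add to_ac_mult to_ac_diff to_ac_minus to_ac_inverse to_ac_0 to_ac_1)
  show "\<exists>r. card {id :: 'k alg_closure \<Rightarrow> _} = 2 ^ r" by (rule exI[of _ 0]) simp
qed auto

section \<open>Adjoining a square root\<close>

definition adjoin :: "'a::field set \<Rightarrow> 'a \<Rightarrow> 'a set" where
  "adjoin F b = {u + v * b |u v. u \<in> F \<and> v \<in> F}"

definition coords :: "'a::field set \<Rightarrow> 'a \<Rightarrow> 'a \<Rightarrow> 'a \<times> 'a" where
  "coords F b z = (SOME (u, v). u \<in> F \<and> v \<in> F \<and> z = u + v * b)"

lemma adjoinE:
  assumes "z \<in> adjoin F b"
  obtains u v where "u \<in> F" "v \<in> F" "z = u + v * b"
  using assms unfolding adjoin_def by blast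

lemma adjoinI: "u \<in> F \<Longrightarrow> v \<in> F \<Longrightarrow> u + v * b \<in> adjoin F b"
  unfolding adjoin_def by blast

context
  fixes F :: "'a::field set" and b :: 'a
  assumes F: "subfield F" and b_notin: "b \<notin> F"
begin

lemma adjoin_coords_unique:
  assumes "u \<in> F" "v \<in> F" "u' \<in> F" "v' \<in> F" "u + v * b = u' + v' * b"
  shows "u = u' \<and> v = v'"
proof (cases "v = v'")
  case False
  have "(v' - v) * b = u - u'" using assms(5) by (simp add: algebra_simps)
  then have "b = (u - u') / (v' - v)" using False by (simp add: field_simps)
  moreover have "(u - u') / (v' - v) \<in> F"
    using assms by (simp add: subfield_diff[OF F] subfield_divide[OF F])
  ultimately show ?thesis using b_notin by simp
qed (use assms in simp)

lemma coords_eq: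
  assumes "u \<in> F" "v \<in> F"
  shows "coords F b (u + v * b) = (u, v)"
  unfolding coords_def
proof (rule some_equality)
  fix uv :: "'a \<times> 'a"
  assume "case uv of (u', v') \<Rightarrow> u' \<in> F \<and> v' \<in> F \<and> u + v * b = u' + v' * b"
  then show "uv = (u, v)" using adjoin_coords_unique[OF assms] by (cases uv) auto
qed (use assms in simp)

lemma subset_adjoin: "F \<subseteq> adjoin F b"
  using adjoinI[where v = 0] subfield_zero[OF F] by force

lemma in_adjoin: "b \<in> adjoin F b"
  using adjoinI[where u = 0 and v = 1] subfield_zero[OF F] subfield_one[OF F] by simp

lemma subfield_adjoin:
  assumes b_square: "b^2 \<in> F"
  shows "subfield (adjoin F b)"
proof -
  note closed = subfield_add[OF F] subfield_mult[OF F] subfield_diff[OF F] subfield_uminus[OF F]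
    subfield_inverse[OF F] subfield_zero[OF F] subfield_one[OF F]
  have ring_closed: "x + y \<in> adjoin F b \<and> x * y \<in> adjoin F b \<and> x - y \<in> adjoin F b"
    if x: "x \<in> adjoin F b" and y: "y \<in> adjoin F b" for x y
  proof -
    obtain u v u' v' where uv: "u \<in> F" "v \<in> F" "x = u + v * b" "u' \<in> F" "v' \<in> F" "y = u' + v' * b"
      using x y by (meson adjoinE)
    have "x + y = (u + u') + (v + v') * b" "x - y = (u - u') + (v - v') * b"
      "x * y = (u * u' + v * v' * b^2) + (u * v' + v * u') * b"
      unfolding uv by (simp_all add: algebra_simps power2_eq_square)
    then show ?thesis using uv b_square closed by (metis adjoinI)
  qed
  have inverse_closed: "inverse x \<in> adjoin F b" if x: "x \<in> adjoin F b" for x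
  proof -
    obtain u v where uv: "u \<in> F" "v \<in> F" "x = u + v * b" using x by (rule adjoinE)
    define N where "N = u * u - v * v * b^2"
    have "N \<in> F" unfolding N_def using uv b_square closed by simp
    have conj: "x * (u - v * b) = N" unfolding uv N_def by (simp add: algebra_simps power2_eq_square)
    show ?thesis
    proof (cases "N = 0")
      case True
      then have "x = 0 \<or> u + (- v) * b = 0 + 0 * b" using conj by simp
      then have "x = 0"
        using adjoin_coords_unique[of u "- v" 0 0] uv closed by auto
      then show ?thesis using subset_adjoin closed by auto
    next
      case False
      have "x * (u / N + (- v / N) * b) = 1"
        using conj False by (simp add: field_simps)
      then have "inverse x = u / N + (- v / N) * b" by (rule inverse_unique)
      moreover have "u / N + (- v / N) * b \<in> adjoin F b"
        by (rule adjoinI) (use uv \<open>N \<in> F\<close> closed subfield_divide[OF F] in auto)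
      ultimately show ?thesis by simp
    qed
  qed
  show ?thesis
    unfolding subfield_def using ring_closed inverse_closed subset_adjoin closed
    by (metis diff_0 subsetD)
qed

end

definition extend_map :: "'a::field set \<Rightarrow> 'a \<Rightarrow> ('a \<Rightarrow> 'a) \<Rightarrow> 'a \<Rightarrow> 'a \<Rightarrow> 'a" where
  "extend_map F b g s z =
    (if z \<in> adjoin F b then g (fst (coords F b z)) + s * g (snd (coords F b z)) * b else z)"

definition extended_group :: "'a::field set \<Rightarrow> 'a \<Rightarrow> ('a \<Rightarrow> 'a) set \<Rightarrow> ('a \<Rightarrow> 'a) set" where
  "extended_group F b G = (\<lambda>(g, s). extend_map F b g s) ` (G \<times> {1, -1})"

lemma extended_groupE:
  assumes "f \<in> extended_group F b G"
  obtains g s where "g \<in> G" "s \<in> {1, -1}" "f = extend_map F b g s"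
  using assms that unfolding extended_group_def by auto

lemma extend_map_in_extended_group:
  "g \<in> G \<Longrightarrow> s \<in> {1, -1} \<Longrightarrow> extend_map F b g s \<in> extended_group F b G"
  unfolding extended_group_def by (rule image_eqI[of _ _ "(g, s)"]) simp_all

context involution_group
begin

lemma hom_sign: "g \<in> G \<Longrightarrow> s \<in> {1, -1} \<Longrightarrow> w \<in> F \<Longrightarrow> g (s * w) = s * g w"
  by (auto simp: hom_uminus)

context
  fixes b :: "'k alg_closure" and c :: 'k
  assumes char: "CHAR('k) \<noteq> 2" and b_notin: "b \<notin> F" and b_square: "b^2 = to_ac c"
begin

lemma extend_map_eq: "u \<in> F \<Longrightarrow> v \<in> F \<Longrightarrow> extend_map F b g s (u + v * b) = g u + s * g v * b"
  unfolding extend_map_def by (simp add: adjoinI coords_eq[OF subfield b_notin])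

lemma extend_map_outside: "z \<notin> adjoin F b \<Longrightarrow> extend_map F b g s z = z"
  unfolding extend_map_def by simp

lemma extend_map_in_adjoin:
  assumes "g \<in> G" "s \<in> {1, -1}" "z \<in> adjoin F b"
  shows "extend_map F b g s z \<in> adjoin F b"
proof -
  obtain u v where uv: "u \<in> F" "v \<in> F" "z = u + v * b"
    using assms(3) by (rule adjoinE)
  have "s * g v \<in> F" using assms(1,2) uv maps_into subfield_uminus[OF subfield] by auto
  then show ?thesis
    using uv assms(1) maps_into by (simp add: extend_map_eq adjoinI)
qed

lemma extend_map_id: "extend_map F b id 1 = id"
proof
  fix z
  show "extend_map F b id 1 z = id z"
    by (cases "z \<in> adjoin F b")
      (auto elim: adjoinE simp: extend_map_eq extend_map_outside)
qed

lemma extend_map_comp: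
  assumes g: "g \<in> G" and h: "h \<in> G" and "s \<in> {1, -1}" "t \<in> {1, -1}"
  shows "extend_map F b g s \<circ> extend_map F b h t = extend_map F b (g \<circ> h) (s * t)"
proof
  fix z
  show "(extend_map F b g s \<circ> extend_map F b h t) z = extend_map F b (g \<circ> h) (s * t) z"
  proof (cases "z \<in> adjoin F b")
    case True
    then obtain u v where uv: "u \<in> F" "v \<in> F" "z = u + v * b"
      by (rule adjoinE)
    have "t * h v \<in> F" using assms uv maps_into subfield_uminus[OF subfield] by auto
    then have "(extend_map F b g s \<circ> extend_map F b h t) z = g (h u) + s * g (t * h v) * b"
      using uv h maps_into by (simp add: extend_map_eq)
    also have "\<dots> = extend_map F b (g \<circ> h) (s * t) z"
      using uv assms maps_into hom_sign by (simp add: extend_map_eq)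
    finally show ?thesis .
  qed (simp add: extend_map_outside)
qed

lemma extend_map_hom:
  assumes g: "g \<in> G" and s: "s \<in> {1, -1}" and x: "x \<in> adjoin F b" and y: "y \<in> adjoin F b"
  shows "extend_map F b g s (x + y) = extend_map F b g s x + extend_map F b g s y"
    and "extend_map F b g s (x * y) = extend_map F b g s x * extend_map F b g s y"
proof -
  obtain u v where uv: "u \<in> F" "v \<in> F" "x = u + v * b"
    using x by (rule adjoinE)
  obtain u' v' where uv': "u' \<in> F" "v' \<in> F" "y = u' + v' * b"
    using y by (rule adjoinE)
  note closed = subfield_add[OF subfield] subfield_mult[OF subfield] to_ac_in_F
  have ex: "extend_map F b g s x = g u + s * g v * b" and ey: "extend_map F b g s y = g u' + s * g v' * b"
    using uv uv' by (simp_all add: extend_map_eq)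
  have sum: "x + y = (u + u') + (v + v') * b" unfolding uv uv' by (simp add: algebra_simps)
  have "extend_map F b g s (x + y) = g (u + u') + s * g (v + v') * b"
    unfolding sum by (rule extend_map_eq) (use uv uv' closed in auto)
  then show "extend_map F b g s (x + y) = extend_map F b g s x + extend_map F b g s y"
    unfolding ex ey using uv uv' g by (simp add: hom_add algebra_simps)
  have "s * s = 1" using s by auto
  then have "(s * b) * (s * b) = to_ac c" using b_square by (simp add: power2_eq_square algebra_simps)
  moreover have "x * y = (u * u' + v * v' * to_ac c) + (u * v' + v * u') * b"
    unfolding uv uv' b_square[symmetric] by (simp add: algebra_simps power2_eq_square)
  then have "extend_map F b g s (x * y) = g (u * u' + v * v' * to_ac c) + s * g (u * v' + v * u') * b"
    using uv uv' closed by (simp add: extend_map_eq)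
  ultimately show "extend_map F b g s (x * y) = extend_map F b g s x * extend_map F b g s y"
    unfolding ex ey using uv uv' g closed
    by (simp add: hom_add hom_mult fixes_to_ac algebra_simps)
qed

lemma extend_map_to_ac:
  assumes "g \<in> G"
  shows "extend_map F b g s (to_ac k) = to_ac k"
  using extend_map_eq[OF to_ac_in_F subfield_zero[OF subfield], of g s] fixes_to_ac[OF assms] hom_0[OF assms]
  by simp

lemma inj_on_extend_map: "inj_on (\<lambda>(g, s). extend_map F b g s) (G \<times> {1, -1})"
proof (rule inj_onI, clarify)
  fix g s h t
  assume g: "g \<in> G" and h: "h \<in> G" and "s \<in> {1, -1}" "t \<in> {1, -1}"
    and eq: "extend_map F b g s = extend_map F b h t"
  have "extend_map F b f r (0 + 1 * b) = r * b" if "f \<in> G" for f r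
    using extend_map_eq[OF subfield_zero[OF subfield] subfield_one[OF subfield]] hom_0[OF that]
      hom_1[OF that] by simp
  then have "s * b = t * b" using eq g h by (metis add_0 mult_1)
  moreover have "b \<noteq> 0" using b_notin subfield_zero[OF subfield] by auto
  ultimately have "s = t" by simp
  moreover have "g z = h z" for z
  proof (cases "z \<in> F")
    case True
    have "extend_map F b f r (z + 0 * b) = f z" if "f \<in> G" for f r
      using extend_map_eq[OF True subfield_zero[OF subfield]] hom_0[OF that] by simp
    then show ?thesis using eq g h by (metis add_0_right mult_zero_left)
  qed (simp add: g h fixes_outside)
  ultimately show "g = h \<and> s = t" by auto
qed

lemma card_extended_group: "card (extended_group F b G) = 2 * card G"
proof -
  have "(1 :: 'k alg_closure) \<noteq> -1"
    using two_neq_zero_alg_closure[OF char] by (metis one_add_one add_eq_0_iff)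
  then show ?thesis
    using finite_G unfolding extended_group_def
    by (simp add: card_image[OF inj_on_extend_map] card_cartesian_product)
qed

lemma extended_group_fixed_points:
  assumes z: "z \<in> adjoin F b" and fixed: "\<And>f. f \<in> extended_group F b G \<Longrightarrow> f z = z"
  shows "z \<in> range to_ac"
proof -
  obtain u v where uv: "u \<in> F" "v \<in> F" "z = u + v * b"
    using z by (rule adjoinE)
  have "extend_map F b id (-1) z = z"
    using fixed id_in_G by (simp add: extend_map_in_extended_group)
  moreover have "extend_map F b id (-1) z = u - v * b"
    using extend_map_eq[OF uv(1,2), of id "-1"] uv(3) by simp
  ultimately have "2 * (v * b) = 0" using uv(3) by (simp add: algebra_simps)
  moreover have "(2::'k alg_closure) \<noteq> 0" using two_neq_zero_alg_closure[OF char] .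
  moreover have "b \<noteq> 0" using b_notin subfield_zero[OF subfield] by auto
  ultimately have "v = 0" by simp
  show "z \<in> range to_ac"
  proof (rule fixed_points)
    show "z \<in> F" using uv \<open>v = 0\<close> by simp
    fix g assume "g \<in> G"
    then have "extend_map F b g 1 z = z" using fixed by (simp add: extend_map_in_extended_group)
    moreover have "extend_map F b g 1 z = g z"
      using extend_map_eq[OF uv(1,2), of g 1] uv(3) \<open>v = 0\<close> hom_0[OF \<open>g \<in> G\<close>] by simp
    ultimately show "g z = z" by simp
  qed
qed

lemma involution_group_adjoin: "involution_group (adjoin F b) (extended_group F b G)"
proof (rule involution_group.intro)
  have "b^2 \<in> F" using b_square to_ac_in_F by simp
  then show "subfield (adjoin F b)" by (rule subfield_adjoin[OF subfield b_notin])
  show "range to_ac \<subseteq> adjoin F b"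
    using subset_adjoin[OF subfield b_notin] range_to_ac_subset by blast
  show "finite (extended_group F b G)" using finite_G by (simp add: extended_group_def)
  show "id \<in> extended_group F b G"
    using extend_map_id extend_map_in_extended_group id_in_G by (metis insertI1)
  show "\<exists>r. card (extended_group F b G) = 2 ^ r"
    using card_G_power_of_2 card_extended_group by (metis power_Suc)
  show "\<And>f z. f \<in> extended_group F b G \<Longrightarrow> z \<notin> adjoin F b \<Longrightarrow> f z = z"
    by (auto elim!: extended_groupE simp: extend_map_outside)
  show "\<And>f z. f \<in> extended_group F b G \<Longrightarrow> z \<in> adjoin F b \<Longrightarrow> f z \<in> adjoin F b"
    by (auto elim!: extended_groupE simp: extend_map_in_adjoin)
  show "\<And>f x y. f \<in> extended_group F b G \<Longrightarrow> x \<in> adjoin F b \<Longrightarrow> y \<in> adjoin F b \<Longrightarrow>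
      f (x + y) = f x + f y"
    and "\<And>f x y. f \<in> extended_group F b G \<Longrightarrow> x \<in> adjoin F b \<Longrightarrow> y \<in> adjoin F b \<Longrightarrow>
      f (x * y) = f x * f y"
    by (auto elim!: extended_groupE simp: extend_map_hom)
  show "\<And>f k. f \<in> extended_group F b G \<Longrightarrow> f (to_ac k) = to_ac k"
    by (auto elim!: extended_groupE simp: extend_map_to_ac)
  show "\<And>f h. f \<in> extended_group F b G \<Longrightarrow> h \<in> extended_group F b G \<Longrightarrow>
      f \<circ> h \<in> extended_group F b G"
    by (auto elim!: extended_groupE simp: extend_map_comp comp_in_G extend_map_in_extended_group)
  show "f (f z) = z" if f_in: "f \<in> extended_group F b G" for f z
  proof -
    obtain g s where g: "g \<in> G" and s: "s \<in> {1, -1}" and f: "f = extend_map F b g s"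
      using f_in by (rule extended_groupE)
    have "g \<circ> g = id" "s * s = 1" using g s involutive by (auto simp: fun_eq_iff)
    then have "f \<circ> f = id" unfolding f using extend_map_comp[OF g g s s] extend_map_id by simp
    then show ?thesis by (metis comp_apply id_apply)
  qed
  show "\<And>z. z \<in> adjoin F b \<Longrightarrow> (\<And>f. f \<in> extended_group F b G \<Longrightarrow> f z = z) \<Longrightarrow> z \<in> range to_ac"
    by (rule extended_group_fixed_points)
qed

end

lemma adjoin_sqrt:
  assumes "CHAR('k) \<noteq> 2" "b^2 \<in> range to_ac"
  obtains F' G' where "involution_group F' G'" "F \<subseteq> F'" "b \<in> F'" "card G' \<le> 2 * card G"
proof (cases "b \<in> F")
  case True
  show ?thesis by (rule that[OF involution_group_axioms order_refl True]) simp
next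
  case False
  obtain c where c: "b^2 = to_ac c" using assms(2) by blast
  show ?thesis
  proof (rule that)
    show "involution_group (adjoin F b) (extended_group F b G)"
      by (rule involution_group_adjoin[OF assms(1) False c])
    show "F \<subseteq> adjoin F b" by (rule subset_adjoin[OF subfield False])
    show "b \<in> adjoin F b" by (rule in_adjoin[OF subfield False])
    show "card (extended_group F b G) \<le> 2 * card G"
      by (simp add: card_extended_group[OF assms(1) False c])
  qed
qed

end

lemma involution_group_containing:
  fixes \<theta> :: "nat \<Rightarrow> 'k::field alg_closure"
  assumes "CHAR('k) \<noteq> 2" "\<forall>i<n. deg_over (\<theta> i) \<le> 2"
  shows "\<exists>F G. involution_group F G \<and> \<theta> ` {..<n} \<subseteq> F"
  using assms(2)
proof (induction n)
  case 0
  then show ?case using involution_group_range_to_ac by blast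
next
  case (Suc n)
  then obtain F G where FG: "involution_group F G" "\<theta> ` {..<n} \<subseteq> F" by auto
  interpret involution_group F G by (rule FG(1))
  obtain a b where ab: "\<theta> n = to_ac a + b" "b^2 \<in> range to_ac"
    using sqrt_decomposition[OF assms(1)] Suc.prems by blast
  obtain F' G' where F'G': "involution_group F' G'" "F \<subseteq> F'" "b \<in> F'"
    using adjoin_sqrt[OF assms(1) ab(2)] by blast
  have "\<theta> n \<in> F'"
    unfolding ab(1) using F'G'(1,3) by (simp add: involution_group.to_ac_in_F subfield_add
        involution_group.subfield)
  then show ?case using FG(2) F'G'(1,2) lessThan_Suc by (intro exI[of _ F'] exI[of _ G']) auto
qed

lemma gen_field_regular_and_invol_sum:
  fixes \<theta> :: "nat \<Rightarrow> 'k::field alg_closure"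
  assumes char: "CHAR('k) \<noteq> 2" and deg: "\<forall>i<n. deg_over (\<theta> i) \<le> 2"
  shows "gen_field (\<theta> ` {..<n}) \<subseteq> {x. regular x}"
    and "invol (\<Sum>i<n. \<theta> i) = (\<Sum>i<n. invol (\<theta> i))"
proof -
  obtain F G where FG: "involution_group F G" and \<theta>: "\<theta> ` {..<n} \<subseteq> F"
    using involution_group_containing[OF assms] by blast
  interpret involution_group F G by (rule FG)
  show "gen_field (\<theta> ` {..<n}) \<subseteq> {x. regular x}"
    using gen_field_subset[OF subfield range_to_ac_subset \<theta>] regular_in_F[OF char] by auto
  show "invol (\<Sum>i<n. \<theta> i) = (\<Sum>i<n. invol (\<theta> i))"
    by (rule invol_sum[OF char]) (use \<theta> in blast)
qed

lemma invol_mult_gen_field: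
  fixes lam :: "'k::field alg_closure"
  assumes char: "CHAR('k) \<noteq> 2" and deg: "deg_over lam \<le> 2"
    and "x \<in> gen_field {lam}" "y \<in> gen_field {lam}"
  shows "invol (x * y) = invol x * invol y"
proof -
  obtain a b where ab: "lam = to_ac a + b" "b^2 \<in> range to_ac"
    using sqrt_decomposition[OF char deg] by blast
  obtain F G where "involution_group F G" "b \<in> F" "card G \<le> 2"
  proof (rule involution_group.adjoin_sqrt[OF involution_group_range_to_ac char ab(2)])
    fix F' G' assume "involution_group F' G'" "b \<in> F'" "card G' \<le> 2 * card {id :: 'k alg_closure \<Rightarrow> _}"
    then show thesis using that by simp
  qed
  then interpret involution_group F G by blast
  have "lam \<in> F" unfolding ab(1) using \<open>b \<in> F\<close> by (simp add: to_ac_in_F subfield_add[OF subfield])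
  then have "gen_field {lam} \<subseteq> F" by (intro gen_field_subset[OF subfield range_to_ac_subset]) simp
  then show ?thesis using invol_mult[OF char \<open>card G \<le> 2\<close>] assms(3,4) by blast
qed

theorem proposition1p12:
  assumes char: "CHAR('k :: field) \<noteq> 2"
  shows
   "(\<forall>(\<alpha>::'k) \<beta> lam. \<beta> \<in> KerH \<and> lam = to_ac \<alpha> + \<beta> \<and> deg_over lam = 2 \<longrightarrow>
        {mu. poly (map_poly to_ac (min_poly lam)) mu = 0} - {lam} = {invol lam}
        \<and> invol lam = to_ac \<alpha> - \<beta>)
    \<and> (\<forall>(th :: nat \<Rightarrow> 'k alg_closure) n. (\<forall>i<n. deg_over (th i) \<le> 2) \<longrightarrow>
        gen_field (th ` {..<n}) \<subseteq> {x. regular x}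
        \<and> invol (\<Sum>i<n. th i) = (\<Sum>i<n. invol (th i)))
    \<and> (\<forall>lam :: 'k alg_closure. deg_over lam \<le> 2 \<longrightarrow>
        (\<forall>x\<in>gen_field {lam}. \<forall>y\<in>gen_field {lam}. invol (x * y) = invol x * invol y))
    \<and> (\<forall>\<beta> \<beta>' :: 'k alg_closure. \<beta> \<in> KerH \<and> \<beta>' \<in> KerH \<and> deg_over \<beta> = 2 \<and> deg_over \<beta>' = 2 \<longrightarrow>
        (\<beta> * \<beta>' \<in> range to_ac \<longleftrightarrow> lin_dep2 \<beta> \<beta>')
        \<and> (\<not> lin_dep2 \<beta> \<beta>' \<longrightarrow> deg_over (\<beta> * \<beta>') = 2 \<and> \<beta> * \<beta>' \<in> KerH))
    \<and> (\<forall>\<beta> :: 'k alg_closure. deg_over \<beta> = 2 \<longrightarrow>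
        (\<beta> \<in> KerH \<longleftrightarrow> \<beta> \<notin> range to_ac \<and> \<beta>^2 \<in> range to_ac))"
proof (intro conjI allI impI ballI; (elim conjE)?)
  fix \<alpha> :: 'k and \<beta> lam
  assume "\<beta> \<in> KerH" "lam = to_ac \<alpha> + \<beta>" "deg_over lam = 2"
  then show "{mu. poly (map_poly to_ac (min_poly lam)) mu = 0} - {lam} = {invol lam}"
    and "invol lam = to_ac \<alpha> - \<beta>"
    using conjugate_eq_invol[OF char] by blast+
qed (use gen_field_regular_and_invol_sum[OF char] invol_mult_gen_field[OF char]
      KerH_mult[OF char] KerH_iff_sqrt[OF char] in \<open>blast+\<close>)

end
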